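(* Let $T\in B(\mathcal{F})$ be a block-diagonal operator and let $(A_n)_{n\ge0}$ be its sequence of $\mathcal{C}$-approximants. Then for every $n\ge1$, \[\|A_{n+1}-A_n\|=\|T|_{\mathcal{F}_{n+1}}-(T|_{\mathcal{F}_n})\otimes I\|,\] where $(T|_{\mathcal{F}_n})\otimes I$ acts on $\mathcal{F}_{n+1}=\mathcal{F}_n\otimes\mathbb{C}^d$.
   Context: $d\ge2$; $\xi_1,\ldots,\xi_d$ is the standard orthonormal basis of $\mathbb{C}^d$. $\mathcal{F}=\bigoplus_{n\ge0}\mathcal{F}_n$ is the full Fock space, $\mathcal{F}_0=\mathbb{C}\Omega$, $\mathcal{F}_n=(\mathbb{C}^d)^{\otimes n}$ with the usual inner product. $L_j\eta=\xi_j\otimes\eta$ (and $L_j\Omega=\xi_j$) are the left creation operators. $T$ is block-diagonal if $T(\mathcal{F}_n)\subseteq\mathcal{F}_n$ for all $n$. The $\mathcal{C}$-approximants of $T$ are defined recursively by $A_0=\langle T\Omega,\Omega\rangle I_{\mathcal{F}}$ and, for $n\ge0$, $A_{n+1}=A_n+\sum c_{i_1,\ldots,i_{n+1};j_1,\ldots,j_{n+1}}(L_{i_1}\cdots L_{i_{n+1}})(L_{j_1}\cdots L_{j_{n+1}})^*$, the sum over all $1\le i_1,\ldots,i_{n+1},j_1,\ldots,j_{n+1}\le d$, with $c_{i_1,\ldots,i_{n+1};j_1,\ldots,j_{n+1}}=\langle T(\xi_{j_1}\otimes\cdots\otimes\xi_{j_{n+1}}),\xi_{i_1}\otimes\cdots\otimes\xi_{i_{n+1}}\rangle-\delta_{i_{n+1},j_{n+1}}\langle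 T(\xi_{j_1}\otimes\cdots\otimes\xi_{j_n}),\xi_{i_1}\otimes\cdots\otimes\xi_{i_n}\rangle$ (for $n=0$ the second inner product is $\langle T\Omega,\Omega\rangle$). *)

theory Defs
  imports "HOL-Analysis.Analysis"
begin

text \<open>Concrete model of the full Fock space over C^d.  The orthonormal basis vector
  xi_{i1} (x) ... (x) xi_{in} is indexed by the word [i1,...,in] (letters in 0..<d,
  i.e. letter k stands for xi_{k+1}); the vacuum Omega is the empty word.\<close>

type_synonym fvec = "nat list \<Rightarrow> complex"
type_synonym fop = "fvec \<Rightarrow> fvec"

definition words :: "nat \<Rightarrow> nat \<Rightarrow> nat list set" where
  "words d n = {w. length w = n \<and> set w \<subseteq> {..<d}}"

definition fock :: "nat \<Rightarrow> fvec set" where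
  "fock d = {f. (\<forall>w. f w \<noteq> 0 \<longrightarrow> set w \<subseteq> {..<d}) \<and>
                 (\<lambda>w. (cmod (f w))^2) summable_on UNIV}"

definition fock_n :: "nat \<Rightarrow> nat \<Rightarrow> fvec set" where
  "fock_n d n = {f \<in> fock d. \<forall>w. f w \<noteq> 0 \<longrightarrow> length w = n}"

definition fnorm :: "fvec \<Rightarrow> real" where
  "fnorm f = sqrt (infsum (\<lambda>w. (cmod (f w))^2) UNIV)"

definition finner :: "fvec \<Rightarrow> fvec \<Rightarrow> complex" where
  "finner f g = infsum (\<lambda>w. f w * cnj (g w)) UNIV"

definition bvec :: "nat list \<Rightarrow> fvec" where
  "bvec u = (\<lambda>w. if w = u then 1 else 0)"

definition bounded_op :: "nat \<Rightarrow> fop \<Rightarrow> bool" where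
  "bounded_op d T \<longleftrightarrow>
     (\<forall>f \<in> fock d. T f \<in> fock d) \<and>
     (\<forall>f \<in> fock d. \<forall>g \<in> fock d. \<forall>a. T (\<lambda>w. a * f w + g w) = (\<lambda>w. a * T f w + T g w)) \<and>
     (\<exists>K. \<forall>f \<in> fock d. fnorm (T f) \<le> K * fnorm f)"

definition block_diag :: "nat \<Rightarrow> fop \<Rightarrow> bool" where
  "block_diag d T \<longleftrightarrow> (\<forall>n. \<forall>f \<in> fock_n d n. T f \<in> fock_n d n)"

definition op_norm :: "nat \<Rightarrow> fop \<Rightarrow> real" where
  "op_norm d S = Sup {fnorm (S f) | f. f \<in> fock d \<and> fnorm f \<le> 1}"

definition op_norm_on :: "nat \<Rightarrow> nat \<Rightarrow> fop \<Rightarrow> real" where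
  "op_norm_on d m S = Sup {fnorm (S f) | f. f \<in> fock_n d m \<and> fnorm f \<le> 1}"

definition Lcre :: "nat \<Rightarrow> fop" where
  "Lcre j f = (\<lambda>w. case w of [] \<Rightarrow> 0 | k # v \<Rightarrow> if k = j then f v else 0)"

definition Lcre_adj :: "nat \<Rightarrow> fop" where
  "Lcre_adj j f = (\<lambda>w. f (j # w))"

fun Lword :: "nat list \<Rightarrow> fop" where
  "Lword [] = id"
| "Lword (i # I) = Lcre i \<circ> Lword I"

fun Lword_adj :: "nat list \<Rightarrow> fop" where
  "Lword_adj [] = id"
| "Lword_adj (i # I) = Lword_adj I \<circ> Lcre_adj i"

definition ccoef :: "fop \<Rightarrow> nat list \<Rightarrow> nat list \<Rightarrow> complex" where
  "ccoef T I J = finner (T (bvec J)) (bvec I)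
     - (if last I = last J then finner (T (bvec (butlast J))) (bvec (butlast I)) else 0)"

fun C_approx :: "nat \<Rightarrow> fop \<Rightarrow> nat \<Rightarrow> fop" where
  "C_approx d T 0 = (\<lambda>f w. finner (T (bvec [])) (bvec []) * f w)"
| "C_approx d T (Suc n) = (\<lambda>f w. C_approx d T n f w +
      (\<Sum>IJ \<in> words d (Suc n) \<times> words d (Suc n).
          ccoef T (fst IJ) (snd IJ) * Lword (fst IJ) (Lword_adj (snd IJ) f) w))"

text \<open>(S restricted to F_n) tensor I acting on F_{n+1} = F_n (x) C^d, identifying
  xi_v (x) xi_j with the word v @ [j]\<close>
definition tensor_id :: "fop \<Rightarrow> fop" where
  "tensor_id S f = (\<lambda>w. if w = [] then 0 else S (\<lambda>v. f (v @ [last w])) (butlast w))"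

end

theory Submission
  imports Defs
begin

text \<open>Let Q = T|F_{n+1} - (T|F_n) \<otimes> I. In the word basis its matrix is the coefficient
  array c_{I;J}, and A_{n+1} - A_n acts as the ampliation Q \<otimes> I on F_{n+1} \<otimes> F and as zero
  on F_0, ..., F_n. Splitting f into the slices f_v = \<Sum>_I f(I v) \<xi>_I gives
  \<parallel>(A_{n+1} - A_n) f\<parallel>^2 = \<Sum>_v \<parallel>Q f_v\<parallel>^2 \<le> \<parallel>Q\<parallel>^2 \<parallel>f\<parallel>^2, while on F_{n+1}
  the two operators agree.\<close>

lemma finite_words: "finite (words d n)"
proof -
  have "words d n = {xs. set xs \<subseteq> {..<d} \<and> length xs = n}"
    unfolding words_def by auto
  thus ?thesis using finite_lists_length_eq[of "{..<d}" n] by simp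
qed

lemma words_Suc_iff:
  "w \<in> words d (Suc n) \<longleftrightarrow> w \<noteq> [] \<and> butlast w \<in> words d n \<and> last w < d"
proof (cases w rule: rev_cases)
  case (snoc v a)
  thus ?thesis by (auto simp: words_def)
qed (simp add: words_def)

lemma fock_finite_support:
  assumes "finite S" "\<And>w. f w \<noteq> 0 \<Longrightarrow> w \<in> S \<and> set w \<subseteq> {..<d}"
  shows "f \<in> fock d"
proof -
  have "(\<lambda>w. (cmod (f w))^2) summable_on S" using assms(1) by simp
  hence "(\<lambda>w. (cmod (f w))^2) summable_on UNIV"
    by (rule summable_on_cong_neutral[THEN iffD1, rotated -1]) (use assms(2) in auto)
  thus ?thesis unfolding fock_def using assms(2) by auto
qed

lemma fock_nI:
  assumes "\<And>w. f w \<noteq> 0 \<Longrightarrow> w \<in> words d m"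
  shows "f \<in> fock_n d m"
proof -
  have "f \<in> fock d"
    by (rule fock_finite_support[OF finite_words]) (use assms in \<open>auto simp: words_def\<close>)
  thus ?thesis using assms unfolding fock_n_def words_def by auto
qed

lemma fock_n_support: "f \<in> fock_n d m \<Longrightarrow> f w \<noteq> 0 \<Longrightarrow> w \<in> words d m"
  unfolding fock_n_def fock_def words_def by auto

lemma fock_n_subset_fock: "fock_n d m \<subseteq> fock d"
  unfolding fock_n_def by auto

lemma zero_in_fock_n: "(\<lambda>w. 0) \<in> fock_n d m"
  by (rule fock_nI) simp

lemma bvec_in_fock_n: "K \<in> words d m \<Longrightarrow> bvec K \<in> fock_n d m"
  by (rule fock_nI) (auto simp: bvec_def split: if_splits)

lemma fnorm_nonneg: "0 \<le> fnorm f"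
  unfolding fnorm_def by (simp add: infsum_nonneg)

lemma fnorm_zero: "fnorm (\<lambda>w. 0) = 0"
  by (simp add: fnorm_def)

lemma fnorm_scale: "fnorm (\<lambda>w. a * f w) = cmod a * fnorm f"
  by (simp add: fnorm_def norm_mult power_mult_distrib infsum_cmult_right' real_sqrt_mult)

lemma fnorm_finite_support:
  assumes "finite S" "\<And>w. w \<notin> S \<Longrightarrow> f w = 0"
  shows "fnorm f = sqrt (\<Sum>w\<in>S. (cmod (f w))^2)"
proof -
  have "infsum (\<lambda>w. (cmod (f w))^2) UNIV = infsum (\<lambda>w. (cmod (f w))^2) S"
    by (rule infsum_cong_neutral) (use assms(2) in auto)
  thus ?thesis unfolding fnorm_def using assms(1) by simp
qed

lemma fnorm_fock_n:
  "f \<in> fock_n d m \<Longrightarrow> fnorm f = sqrt (\<Sum>w\<in>words d m. (cmod (f w))^2)"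
  by (rule fnorm_finite_support[OF finite_words]) (use fock_n_support in blast)

lemma norm_le_fnorm:
  assumes "f \<in> fock_n d m" shows "cmod (f w) \<le> fnorm f"
proof (cases "w \<in> words d m")
  case True
  have "(cmod (f w))^2 \<le> (\<Sum>w\<in>words d m. (cmod (f w))^2)"
    by (rule member_le_sum[OF True]) (auto simp: finite_words)
  thus ?thesis using fnorm_fock_n[OF assms] by (simp add: real_le_rsqrt)
next
  case False
  hence "f w = 0" using fock_n_support[OF assms] by blast
  thus ?thesis using fnorm_nonneg by simp
qed

lemma finite_sum_le_fnorm:
  assumes "f \<in> fock d" "finite F"
  shows "(\<Sum>w\<in>F. (cmod (f w))^2) \<le> (fnorm f)^2"
proof -
  have "(\<lambda>w. (cmod (f w))^2) summable_on UNIV" using assms(1) by (simp add: fock_def)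
  hence "(\<Sum>w\<in>F. (cmod (f w))^2) \<le> infsum (\<lambda>w. (cmod (f w))^2) UNIV"
    by (rule finite_sum_le_infsum) (use assms(2) in auto)
  thus ?thesis by (simp add: fnorm_def infsum_nonneg)
qed

lemma fnorm_le_of_finite_sums:
  assumes "0 \<le> B" "\<And>F. finite F \<Longrightarrow> (\<Sum>w\<in>F. (cmod (f w))^2) \<le> B^2"
  shows "fnorm f \<le> B"
proof -
  have "(\<lambda>w. (cmod (f w))^2) summable_on UNIV"
    by (rule nonneg_bdd_above_summable_on) (auto intro!: bdd_aboveI2[where M="B^2"] assms(2))
  hence "infsum (\<lambda>w. (cmod (f w))^2) UNIV \<le> B^2"
    by (rule infsum_le_finite_sums) (rule assms(2))
  hence "fnorm f \<le> sqrt (B^2)" unfolding fnorm_def by (rule real_sqrt_le_mono)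
  thus ?thesis using assms(1) by simp
qed

definition mat_op :: "nat \<Rightarrow> nat \<Rightarrow> (nat list \<Rightarrow> nat list \<Rightarrow> complex) \<Rightarrow> fop" where
  "mat_op d m M g = (\<lambda>w. if w \<in> words d m then \<Sum>J\<in>words d m. M w J * g J else 0)"

text \<open>The ampliation M \<otimes> I on F_m \<otimes> F: the word I @ v with length I = m stands for
  \<xi>_I \<otimes> \<xi>_v. Words shorter than m are sent to zero.\<close>

definition mat_ampl :: "nat \<Rightarrow> nat \<Rightarrow> (nat list \<Rightarrow> nat list \<Rightarrow> complex) \<Rightarrow> fop" where
  "mat_ampl d m M f = (\<lambda>w. if take m w \<in> words d m
      then \<Sum>J\<in>words d m. M (take m w) J * f (J @ drop m w) else 0)"

lemma mat_op_in_fock_n: "mat_op d m M g \<in> fock_n d m"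
  by (rule fock_nI) (simp add: mat_op_def split: if_splits)

lemma mat_op_scale: "mat_op d m M (\<lambda>w. a * g w) = (\<lambda>w. a * mat_op d m M g w)"
  by (rule ext) (simp add: mat_op_def sum_distrib_left mult.left_commute)

lemma op_norm_on_cong:
  assumes "\<And>f. f \<in> fock_n d m \<Longrightarrow> S f = S' f"
  shows "op_norm_on d m S = op_norm_on d m S'"
  unfolding op_norm_on_def by (rule arg_cong[where f = Sup]) (use assms in force)

lemma mat_ampl_fock_n:
  assumes "g \<in> fock_n d m"
  shows "mat_ampl d m M g = mat_op d m M g"
proof
  fix w
  show "mat_ampl d m M g w = mat_op d m M g w"
  proof (cases "take m w \<in> words d m \<and> drop m w \<noteq> []")
    case True
    hence "J @ drop m w \<notin> words d m" if "J \<in> words d m" for J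
      using that by (simp add: words_def)
    hence "g (J @ drop m w) = 0" if "J \<in> words d m" for J
      using that fock_n_support[OF assms] by blast
    moreover have "w \<notin> words d m" using True by (auto simp: words_def)
    ultimately show ?thesis using True by (simp add: mat_ampl_def mat_op_def)
  next
    case outside: False
    show ?thesis
    proof (cases "drop m w = []")
      case True
      thus ?thesis by (simp add: mat_ampl_def mat_op_def)
    next
      case False
      hence "take m w \<notin> words d m" "w \<notin> words d m"
        using outside by (auto simp: words_def)
      thus ?thesis by (simp add: mat_ampl_def mat_op_def)
    qed
  qed
qed

lemma bdd_above_mat_op_norms:
  "bdd_above {fnorm (mat_op d m M g) | g. g \<in> fock_n d m \<and> fnorm g \<le> 1}"
proof -
  let ?W = "words d m"
  define C where "C = (\<Sum>I\<in>?W. \<Sum>J\<in>?W. cmod (M I J))"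
  have "fnorm (mat_op d m M g) \<le> sqrt (\<Sum>w\<in>?W. C^2)"
    if g: "g \<in> fock_n d m" "fnorm g \<le> 1" for g
  proof -
    have "(cmod (mat_op d m M g w))^2 \<le> C^2" if w: "w \<in> ?W" for w
    proof -
      have "cmod (mat_op d m M g w) \<le> (\<Sum>J\<in>?W. cmod (M w J) * cmod (g J))"
        using w by (simp add: mat_op_def norm_mult[symmetric] norm_sum)
      also have "\<dots> \<le> (\<Sum>J\<in>?W. cmod (M w J))"
        using norm_le_fnorm[OF g(1)] g(2)
        by (intro sum_mono mult_left_le) (auto intro: order_trans)
      also have "\<dots> \<le> C" unfolding C_def
        by (rule member_le_sum[OF w]) (auto simp: finite_words intro: sum_nonneg)
      finally show ?thesis by (rule power_mono) simp
    qed
    hence "(\<Sum>w\<in>?W. (cmod (mat_op d m M g w))^2) \<le> (\<Sum>w\<in>?W. C^2)"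
      by (rule sum_mono)
    thus ?thesis using fnorm_fock_n[OF mat_op_in_fock_n] by simp
  qed
  thus ?thesis by (intro bdd_aboveI[where M="sqrt (\<Sum>w\<in>?W. C^2)"]) auto
qed

lemma op_norm_on_mat_op_nonneg: "0 \<le> op_norm_on d m (mat_op d m M)"
proof -
  have "fnorm (mat_op d m M (\<lambda>w. 0)) \<le> op_norm_on d m (mat_op d m M)"
    unfolding op_norm_on_def using zero_in_fock_n fnorm_zero
    by (intro cSup_upper[OF _ bdd_above_mat_op_norms]) auto
  thus ?thesis using fnorm_nonneg order_trans by blast
qed

lemma fnorm_mat_op_le:
  assumes "g \<in> fock_n d m"
  shows "fnorm (mat_op d m M g) \<le> op_norm_on d m (mat_op d m M) * fnorm g"
proof (cases "fnorm g = 0")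
  case True
  hence "g = (\<lambda>w. 0)" using norm_le_fnorm[OF assms] by fastforce
  hence "mat_op d m M g = (\<lambda>w. 0)" by (auto simp: mat_op_def)
  thus ?thesis using True by (simp add: fnorm_zero)
next
  case False
  define t where "t = fnorm g"
  have t: "t > 0" using False fnorm_nonneg[of g] unfolding t_def by linarith
  define h where "h = (\<lambda>w. complex_of_real (1 / t) * g w)"
  have g_eq: "g = (\<lambda>w. complex_of_real t * h w)" using t by (simp add: h_def)
  have h: "h \<in> fock_n d m" "fnorm h = 1"
    using t assms fock_n_support[OF assms] fnorm_scale[of "complex_of_real (1 / t)" g]
    by (auto simp: h_def t_def norm_divide intro!: fock_nI)
  have "fnorm (mat_op d m M h) \<le> op_norm_on d m (mat_op d m M)"
    unfolding op_norm_on_def using h by (intro cSup_upper[OF _ bdd_above_mat_op_norms]) auto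
  thus ?thesis
    using t by (simp add: g_eq mat_op_scale fnorm_scale h(2) t_def[symmetric] mult.commute)
qed

lemma sum_concat_words:
  assumes "finite V"
  shows "sum h ((\<lambda>(I, v). I @ v) ` (words d m \<times> V)) = (\<Sum>v\<in>V. \<Sum>I\<in>words d m. h (I @ v))"
proof -
  have "inj_on (\<lambda>(I, v). I @ v) (words d m \<times> V)"
    by (auto simp: inj_on_def words_def)
  hence "sum h ((\<lambda>(I, v). I @ v) ` (words d m \<times> V)) = (\<Sum>I\<in>words d m. \<Sum>v\<in>V. h (I @ v))"
    by (simp add: sum.reindex sum.cartesian_product split_def)
  thus ?thesis by (simp add: sum.swap[of _ "words d m"])
qed

lemma sum_le_sum_concat_words:
  fixes h :: "nat list \<Rightarrow> 'a::ordered_comm_monoid_add"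
  assumes "finite F" "\<And>w. 0 \<le> h w" "\<And>w. take m w \<notin> words d m \<Longrightarrow> h w = 0"
  shows "sum h F \<le> (\<Sum>v\<in>drop m ` F. \<Sum>I\<in>words d m. h (I @ v))"
proof -
  let ?P = "(\<lambda>(I, v). I @ v) ` (words d m \<times> drop m ` F)"
  have "take m w \<notin> words d m" if "w \<in> F" "w \<notin> ?P" for w
  proof
    assume "take m w \<in> words d m"
    hence "(\<lambda>(I, v). I @ v) (take m w, drop m w) \<in> ?P" using that(1) by blast
    thus False using that(2) by simp
  qed
  hence "sum h F = sum h (F \<inter> ?P)"
    using assms(1,3) by (intro sum.mono_neutral_right) auto
  also have "\<dots> \<le> sum h ?P"
    using assms(1,2) finite_words by (intro sum_mono2) auto
  also have "\<dots> = (\<Sum>v\<in>drop m ` F. \<Sum>I\<in>words d m. h (I @ v))"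
    using assms(1) by (intro sum_concat_words) simp
  finally show ?thesis .
qed

lemma fnorm_mat_ampl_le:
  assumes "f \<in> fock d"
  shows "fnorm (mat_ampl d m M f) \<le> op_norm_on d m (mat_op d m M) * fnorm f"
proof -
  define K where "K = op_norm_on d m (mat_op d m M)"
  define slice where "slice v = (\<lambda>J. if J \<in> words d m then f (J @ v) else 0)" for v
  have slice: "slice v \<in> fock_n d m" for v
    by (rule fock_nI) (simp add: slice_def split: if_splits)
  have ampl_concat: "mat_ampl d m M f (I @ v) = mat_op d m M (slice v) I"
    if "I \<in> words d m" for I v
    using that by (auto simp: mat_ampl_def mat_op_def slice_def words_def intro!: sum.cong)
  have "(\<Sum>w\<in>F. (cmod (mat_ampl d m M f w))^2) \<le> (K * fnorm f)^2" if F: "finite F" for F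
  proof -
    let ?V = "drop m ` F"
    have "(\<Sum>w\<in>F. (cmod (mat_ampl d m M f w))^2)
        \<le> (\<Sum>v\<in>?V. \<Sum>I\<in>words d m. (cmod (mat_ampl d m M f (I @ v)))^2)"
      by (rule sum_le_sum_concat_words) (use F in \<open>auto simp: mat_ampl_def\<close>)
    also have "\<dots> = (\<Sum>v\<in>?V. (fnorm (mat_op d m M (slice v)))^2)"
      using fnorm_fock_n[OF mat_op_in_fock_n] ampl_concat by (simp add: sum_nonneg)
    also have "\<dots> \<le> (\<Sum>v\<in>?V. (K * fnorm (slice v))^2)"
      unfolding K_def by (intro sum_mono power_mono fnorm_mat_op_le slice fnorm_nonneg)
    also have "\<dots> = K^2 * (\<Sum>v\<in>?V. \<Sum>J\<in>words d m. (cmod (f (J @ v)))^2)"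
      using fnorm_fock_n[OF slice]
      by (simp add: sum_nonneg power_mult_distrib sum_distrib_left slice_def)
    also have "\<dots> = K^2 * (\<Sum>w\<in>(\<lambda>(I, v). I @ v) ` (words d m \<times> ?V). (cmod (f w))^2)"
      using F by (simp add: sum_concat_words)
    also have "\<dots> \<le> K^2 * (fnorm f)^2"
      using F finite_words by (intro mult_left_mono finite_sum_le_fnorm[OF assms]) auto
    finally show ?thesis by (simp add: power_mult_distrib)
  qed
  thus ?thesis unfolding K_def
    by (intro fnorm_le_of_finite_sums) (simp_all add: op_norm_on_mat_op_nonneg fnorm_nonneg)
qed

lemma op_norm_mat_ampl: "op_norm d (mat_ampl d m M) = op_norm_on d m (mat_op d m M)"
proof -
  let ?S = "{fnorm (mat_ampl d m M f) | f. f \<in> fock d \<and> fnorm f \<le> 1}"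
  let ?S_m = "{fnorm (mat_op d m M g) | g. g \<in> fock_n d m \<and> fnorm g \<le> 1}"
  have sub: "?S_m \<subseteq> ?S"
  proof
    fix x assume "x \<in> ?S_m"
    then obtain g where "g \<in> fock_n d m" "fnorm g \<le> 1" "x = fnorm (mat_op d m M g)"
      by blast
    thus "x \<in> ?S"
      using fock_n_subset_fock mat_ampl_fock_n by (metis (mono_tags, lifting) mem_Collect_eq subsetD)
  qed
  have ne: "?S_m \<noteq> {}"
    using zero_in_fock_n fnorm_zero by fastforce
  have ub: "x \<le> Sup ?S_m" if "x \<in> ?S" for x
  proof -
    obtain f where f: "f \<in> fock d" "fnorm f \<le> 1" "x = fnorm (mat_ampl d m M f)"
      using \<open>x \<in> ?S\<close> by blast
    have "x \<le> op_norm_on d m (mat_op d m M) * fnorm f"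
      using fnorm_mat_ampl_le[OF f(1)] f(3) by simp
    also have "\<dots> \<le> op_norm_on d m (mat_op d m M)"
      using f(2) op_norm_on_mat_op_nonneg by (simp add: mult_left_le)
    finally show ?thesis by (simp add: op_norm_on_def)
  qed
  have "Sup ?S = Sup ?S_m"
    using sub ne ub by (intro antisym cSup_least cSup_subset_mono bdd_aboveI) auto
  thus ?thesis by (simp add: op_norm_def op_norm_on_def)
qed

lemma finner_bvec: "finner f (bvec u) = f u"
proof -
  have "finner f (bvec u) = infsum (\<lambda>w. f w * cnj (bvec u w)) {u}"
    unfolding finner_def by (rule infsum_cong_neutral) (auto simp: bvec_def)
  thus ?thesis by (simp add: bvec_def)
qed

lemma ccoef_eq:
  "ccoef T I J = T (bvec J) I - (if last I = last J then T (bvec (butlast J)) (butlast I) else 0)"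
  by (simp add: ccoef_def finner_bvec)

lemma Lword_adj_apply: "Lword_adj J f = (\<lambda>v. f (J @ v))"
  by (induction J arbitrary: f) (auto simp: Lcre_adj_def)

lemma Lword_apply: "Lword I g w = (if take (length I) w = I then g (drop (length I) w) else 0)"
  by (induction I arbitrary: w) (auto simp: Lcre_def split: list.splits)

lemma C_approx_Suc_minus:
  "C_approx d T (Suc n) f - C_approx d T n f = mat_ampl d (Suc n) (ccoef T) f"
proof
  fix w
  let ?W = "words d (Suc n)"
  have "(C_approx d T (Suc n) f - C_approx d T n f) w
      = (\<Sum>I\<in>?W. \<Sum>J\<in>?W. ccoef T I J * Lword I (Lword_adj J f) w)"
    by (simp add: sum.cartesian_product split_def)
  also have "\<dots> = (\<Sum>I\<in>?W. if take (Suc n) w = I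
      then \<Sum>J\<in>?W. ccoef T I J * f (J @ drop (Suc n) w) else 0)"
    by (rule sum.cong) (auto simp: Lword_apply Lword_adj_apply words_def)
  also have "\<dots> = mat_ampl d (Suc n) (ccoef T) f w"
    using finite_words by (simp add: sum.delta mat_ampl_def)
  finally show "(C_approx d T (Suc n) f - C_approx d T n f) w = mat_ampl d (Suc n) (ccoef T) f w" .
qed

lemma bounded_op_linear:
  assumes "bounded_op d T" "f \<in> fock d" "g \<in> fock d"
  shows "T (\<lambda>w. a * f w + g w) = (\<lambda>w. a * T f w + T g w)"
  using assms unfolding bounded_op_def by blast

lemma bounded_op_zero:
  assumes "bounded_op d T" shows "T (\<lambda>w. 0) = (\<lambda>w. 0)"
proof -
  have "(\<lambda>w::nat list. 0::complex) \<in> fock d"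
    using zero_in_fock_n fock_n_subset_fock by blast
  from bounded_op_linear[OF assms this this, of 1]
  have "\<And>w. T (\<lambda>w. 0) w = T (\<lambda>w. 0) w + T (\<lambda>w. 0) w" by (metis add_0 mult_1)
  thus ?thesis by auto
qed

lemma bounded_op_sum_bvec:
  assumes "bounded_op d T" "finite S" "S \<subseteq> words d m"
  shows "T (\<lambda>w. \<Sum>K\<in>S. a K * bvec K w) = (\<lambda>w. \<Sum>K\<in>S. a K * T (bvec K) w)"
  using assms(2,3)
proof (induction S rule: finite_induct)
  case empty
  thus ?case using bounded_op_zero[OF assms(1)] by simp
next
  case (insert x F)
  have "bvec x \<in> fock d"
    using insert.prems bvec_in_fock_n fock_n_subset_fock by blast
  moreover have "(\<lambda>w. \<Sum>K\<in>F. a K * bvec K w) \<in> fock d"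
  proof (rule subsetD[OF fock_n_subset_fock], rule fock_nI)
    fix w assume "(\<Sum>K\<in>F. a K * bvec K w) \<noteq> 0"
    then obtain K where "K \<in> F" "a K * bvec K w \<noteq> 0"
      by (rule sum.not_neutral_contains_not_neutral)
    thus "w \<in> words d m" using insert.prems by (auto simp: bvec_def split: if_splits)
  qed
  ultimately have "T (\<lambda>w. a x * bvec x w + (\<Sum>K\<in>F. a K * bvec K w))
      = (\<lambda>w. a x * T (bvec x) w + T (\<lambda>w. \<Sum>K\<in>F. a K * bvec K w) w)"
    by (rule bounded_op_linear[OF assms(1)])
  thus ?case using insert by simp
qed

lemma block_diag_eq_mat_op:
  assumes "bounded_op d T" "block_diag d T" "f \<in> fock_n d m"
  shows "T f = mat_op d m (\<lambda>u K. T (bvec K) u) f"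
proof
  fix u
  let ?W = "words d m"
  have expand: "f = (\<lambda>w. \<Sum>K\<in>?W. f K * bvec K w)"
  proof
    fix w
    have "(\<Sum>K\<in>?W. f K * bvec K w) = (\<Sum>K\<in>?W. if K = w then f w else 0)"
      by (rule sum.cong) (auto simp: bvec_def)
    thus "f w = (\<Sum>K\<in>?W. f K * bvec K w)"
      using fock_n_support[OF assms(3), of w] finite_words by (auto simp: sum.delta')
  qed
  have "T f = T (\<lambda>w. \<Sum>K\<in>?W. f K * bvec K w)"
    by (subst expand) (rule refl)
  also have "\<dots> = (\<lambda>w. \<Sum>K\<in>?W. f K * T (bvec K) w)"
    by (rule bounded_op_sum_bvec[OF assms(1) finite_words order_refl])
  finally have "T f u = (\<Sum>K\<in>?W. f K * T (bvec K) u)" by simp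
  moreover have "T (bvec K) u = 0" if "K \<in> ?W" "u \<notin> ?W" for K
    using that assms(2) bvec_in_fock_n fock_n_support unfolding block_diag_def by blast
  ultimately show "T f u = mat_op d m (\<lambda>u K. T (bvec K) u) f u"
    by (simp add: mat_op_def mult.commute)
qed

lemma tensor_id_fock_n:
  assumes "bounded_op d T" "block_diag d T" "g \<in> fock_n d (Suc n)"
  shows "tensor_id T g w = (if w \<in> words d (Suc n)
    then \<Sum>K\<in>words d n. T (bvec K) (butlast w) * g (K @ [last w]) else 0)"
proof (cases "w = []")
  case True
  thus ?thesis by (simp add: tensor_id_def words_def)
next
  case False
  let ?slice = "\<lambda>v. g (v @ [last w])"
  have slice_support: "v @ [last w] \<in> words d (Suc n)" if "?slice v \<noteq> 0" for v
    using fock_n_support[OF assms(3) that] .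
  have "?slice \<in> fock_n d n"
    by (rule fock_nI) (use slice_support in \<open>auto simp: words_Suc_iff\<close>)
  hence "tensor_id T g w = mat_op d n (\<lambda>u K. T (bvec K) u) ?slice (butlast w)"
    using False block_diag_eq_mat_op[OF assms(1,2)] by (simp add: tensor_id_def)
  moreover have "?slice K = 0" if "last w \<ge> d" for K
    using slice_support that by (auto simp: words_Suc_iff)
  ultimately show ?thesis
    using False by (auto simp: mat_op_def words_Suc_iff)
qed

lemma words_Suc_last:
  assumes "a < d"
  shows "{J \<in> words d (Suc n). last J = a} = (\<lambda>K. K @ [a]) ` words d n"
proof (intro set_eqI iffI)
  fix J assume "J \<in> {J \<in> words d (Suc n). last J = a}"
  hence "J = butlast J @ [a]" "butlast J \<in> words d n"
    by (auto simp: words_Suc_iff)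
  thus "J \<in> (\<lambda>K. K @ [a]) ` words d n" by (metis imageI)
qed (use assms in \<open>auto simp: words_Suc_iff\<close>)

lemma minus_tensor_id_eq_mat_op:
  assumes "bounded_op d T" "block_diag d T" "g \<in> fock_n d (Suc n)"
  shows "T g - tensor_id T g = mat_op d (Suc n) (ccoef T) g"
proof
  fix w
  let ?W = "words d (Suc n)"
  show "(T g - tensor_id T g) w = mat_op d (Suc n) (ccoef T) g w"
  proof (cases "w \<in> ?W")
    case False
    thus ?thesis
      using block_diag_eq_mat_op[OF assms] tensor_id_fock_n[OF assms] by (simp add: mat_op_def)
  next
    case True
    let ?t = "\<lambda>K. T (bvec K) (butlast w)"
    have "last w < d" using True by (simp add: words_Suc_iff)
    have "(\<Sum>J\<in>?W. (if last w = last J then ?t (butlast J) else 0) * g J)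
        = (\<Sum>J\<in>?W. if last J = last w then ?t (butlast J) * g J else 0)"
      by (rule sum.cong) auto
    also have "\<dots> = (\<Sum>J\<in>{J \<in> ?W. last J = last w}. ?t (butlast J) * g J)"
      by (rule sum.inter_filter[OF finite_words, symmetric])
    also have "\<dots> = (\<Sum>K\<in>words d n. ?t K * g (K @ [last w]))"
      unfolding words_Suc_last[OF \<open>last w < d\<close>] by (simp add: sum.reindex inj_on_def)
    finally show ?thesis
      using True block_diag_eq_mat_op[OF assms] tensor_id_fock_n[OF assms]
      by (simp add: mat_op_def ccoef_eq left_diff_distrib sum_subtractf)
  qed
qed

theorem lemma3p3:
  fixes d n :: nat and T :: fop
  assumes "d \<ge> 2" and "bounded_op d T" and "block_diag d T" and "n \<ge> 1"
  shows "op_norm d (\<lambda>f. C_approx d T (Suc n) f - C_approx d T n f)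
       = op_norm_on d (Suc n) (\<lambda>f. T f - tensor_id T f)"
proof -
  have "(\<lambda>f. C_approx d T (Suc n) f - C_approx d T n f) = mat_ampl d (Suc n) (ccoef T)"
    using C_approx_Suc_minus by blast
  hence "op_norm d (\<lambda>f. C_approx d T (Suc n) f - C_approx d T n f)
      = op_norm_on d (Suc n) (mat_op d (Suc n) (ccoef T))"
    by (simp add: op_norm_mat_ampl)
  also have "\<dots> = op_norm_on d (Suc n) (\<lambda>f. T f - tensor_id T f)"
    using minus_tensor_id_eq_mat_op[OF assms(2,3)] by (intro op_norm_on_cong) simp
  finally show ?thesis .
qed

end
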